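(* Let $G=(V,E)$ be a graph and $\mathcal{U}$ a set of utter cliques of $G$ such that $\bigcup_{[W,F]\in\mathcal{U}}E(W)=E$. Then the extended incidence vectors $(\chi^S,\zeta^{E(S)})$ of the co-2-plexes $S$ of $G$ are exactly the vectors $(x,y)\in\{0,1\}^V\times\{0,1\}^E$ satisfying $x(W)+y(F\cap E(V\setminus W))-y(E(W))\le 1$ for all $[W,F]\in\mathcal{U}$ and $y(\delta(v))\le x_v$ for all $v\in V$.
   Context: For $W\subseteq V$, $E(W)$ is the set of edges with both endpoints in $W$, $\delta(v)$ the set of edges incident to $v$, $x(A)=\sum_{a\in A}x_a$. A co-2-plex is a set $S\subseteq V$ such that $G[S]$ has maximum degree at most 1. The utter graph $u(G)$ has vertex set $V\cup E$, where two elements are adjacent iff: they are two adjacent vertices of $G$; or a vertex and an edge incident to it; or two edges sharing an endpoint; or a vertex $w$ and an edge $uv$ not containing $w$ with $wu\in E$ or $wv\in E$; or two disjoint edges $uv,xy$ such that some edge of $G$ joins $\{u,v\}$ to $\{x,y\}$. For $W\subseteq V$, $F\subseteq E$, $[W,F]$ is an utter clique if $W\cup F$ is a clique of $u(G)$. *)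

theory Defs
  imports Main
begin

definition graph :: "'a set \<Rightarrow> 'a set set \<Rightarrow> bool" where
  "graph V E \<longleftrightarrow> finite V \<and> (\<forall>e\<in>E. e \<subseteq> V \<and> card e = 2)"

definition induced_edges :: "'a set set \<Rightarrow> 'a set \<Rightarrow> 'a set set" where
  "induced_edges E W = {e \<in> E. e \<subseteq> W}"

definition delta :: "'a set set \<Rightarrow> 'a \<Rightarrow> 'a set set" where
  "delta E v = {e \<in> E. v \<in> e}"

definition co2plex :: "'a set \<Rightarrow> 'a set set \<Rightarrow> 'a set \<Rightarrow> bool" where
  "co2plex V E S \<longleftrightarrow> S \<subseteq> V \<and> (\<forall>v\<in>S. card {u \<in> S. {u, v} \<in> E} \<le> 1)"

text \<open>Adjacency in the utter graph u(G) (vertex set V + E).\<close>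
definition utter_adj_vv :: "'a set set \<Rightarrow> 'a \<Rightarrow> 'a \<Rightarrow> bool" where
  "utter_adj_vv E u w \<longleftrightarrow> {u, w} \<in> E"

definition utter_adj_ve :: "'a set set \<Rightarrow> 'a \<Rightarrow> 'a set \<Rightarrow> bool" where
  "utter_adj_ve E w e \<longleftrightarrow> w \<in> e \<or> (w \<notin> e \<and> (\<exists>u\<in>e. {w, u} \<in> E))"

definition utter_adj_ee :: "'a set set \<Rightarrow> 'a set \<Rightarrow> 'a set \<Rightarrow> bool" where
  "utter_adj_ee E e f \<longleftrightarrow> e \<inter> f \<noteq> {} \<or> (e \<inter> f = {} \<and> (\<exists>u\<in>e. \<exists>x\<in>f. {u, x} \<in> E))"

definition utter_clique :: "'a set \<Rightarrow> 'a set set \<Rightarrow> 'a set \<Rightarrow> 'a set set \<Rightarrow> bool" where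
  "utter_clique V E W F \<longleftrightarrow> W \<subseteq> V \<and> F \<subseteq> E
     \<and> (\<forall>u\<in>W. \<forall>w\<in>W. u \<noteq> w \<longrightarrow> utter_adj_vv E u w)
     \<and> (\<forall>w\<in>W. \<forall>e\<in>F. utter_adj_ve E w e)
     \<and> (\<forall>e\<in>F. \<forall>f\<in>F. e \<noteq> f \<longrightarrow> utter_adj_ee E e f)"

end

(* The edges E(S) of a co-2-plex S form an induced matching: no two of them, and no vertex of S
   and an edge of E(S) avoiding it, are adjacent in the utter graph. Hence an utter clique [W,F]
   meets S in at most two vertices, two such vertices span an edge of E(W) inside S, and as soon
   as W meets S no edge of F inside S avoids W; this gives the clique inequality.
   Conversely, for a 0/1 solution the degree inequalities put every chosen edge inside the support
   S of x, and double counting gives 2 y(E(W)) <= x(W). For an edge e inside S and a clique W of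
   the cover containing e, the clique inequality then forces W to meet S exactly in e and y(E(W))
   to be positive, so e is chosen; thus y is the incidence vector of E(S), and the degree
   inequalities make S a co-2-plex. *)

theory Submission
  imports Defs
begin

lemma graph_finite_edges: "graph V E \<Longrightarrow> finite E"
  unfolding graph_def by (meson Pow_iff finite_Pow_iff finite_subset subsetI)

lemma graph_edge_subset: "graph V E \<Longrightarrow> e \<in> E \<Longrightarrow> e \<subseteq> V"
  by (simp add: graph_def)

lemma graph_edge_card: "graph V E \<Longrightarrow> e \<in> E \<Longrightarrow> card e = 2"
  by (simp add: graph_def)

lemma graph_edge_other_end:
  assumes "graph V E" "e \<in> E" "v \<in> e"
  obtains u where "u \<noteq> v" "e = {v, u}"
proof -
  obtain a b where "a \<noteq> b" "e = {a, b}"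
    using graph_edge_card[OF assms(1,2)] unfolding card_2_iff by blast
  with assms(3) that[of a] that[of b] show thesis by (auto simp: insert_commute)
qed

lemma finite_induced_edges: "graph V E \<Longrightarrow> finite (induced_edges E W)"
  by (simp add: graph_finite_edges induced_edges_def)

lemma sum_indicator:
  assumes "finite A" "\<forall>a\<in>A. f a = (if a \<in> B then 1 else 0)"
  shows "sum f A = of_nat (card (A \<inter> B))"
proof -
  have "sum f A = (\<Sum>a\<in>A. of_bool (a \<in> B))"
    using assms(2) by (intro sum.cong) auto
  with assms(1) show ?thesis by simp
qed

lemma co2plex_finite: "graph V E \<Longrightarrow> co2plex V E S \<Longrightarrow> finite S"
  unfolding graph_def co2plex_def using finite_subset by blast

lemma co2plex_unique_neighbour:
  assumes G: "graph V E" and co: "co2plex V E S"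
    and "v \<in> S" "a \<in> S" "b \<in> S" "{a, v} \<in> E" "{b, v} \<in> E"
  shows "a = b"
proof -
  have "finite {u \<in> S. {u, v} \<in> E}"
    using co2plex_finite[OF G co] by simp
  moreover have "card {u \<in> S. {u, v} \<in> E} \<le> Suc 0"
    using co \<open>v \<in> S\<close> unfolding co2plex_def by simp
  ultimately show ?thesis
    using assms(4-) card_le_Suc0_iff_eq by blast
qed

lemma co2plex_edges_not_utter_adj:
  assumes G: "graph V E" and co: "co2plex V E S"
    and e: "e \<in> induced_edges E S" and f: "f \<in> induced_edges E S"
    and adj: "utter_adj_ee E e f"
  shows "e = f"
proof -
  have eE: "e \<in> E" "e \<subseteq> S" and fE: "f \<in> E" "f \<subseteq> S"
    using e f by (auto simp: induced_edges_def)
  have nbr: "a = b" if "v \<in> S" "{v, a} \<in> E" "{v, b} \<in> E" "a \<in> S" "b \<in> S" for v a b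
    using co2plex_unique_neighbour[OF G co, of v a b] that by (simp add: insert_commute)
  obtain u z where uz: "u \<in> e" "z \<in> f" "u = z \<or> {u, z} \<in> E"
    using adj unfolding utter_adj_ee_def by blast
  obtain u' where u': "u' \<noteq> u" "e = {u, u'}" using graph_edge_other_end[OF G eE(1) uz(1)] .
  obtain z' where z': "z' \<noteq> z" "f = {z, z'}" using graph_edge_other_end[OF G fE(1) uz(2)] .
  show ?thesis
  proof (cases "u = z")
    case True
    then have "u' = z'"
      using nbr[of u u' z'] u' z' eE fE by auto
    with True u' z' show ?thesis by simp
  next
    case False
    then have "{u, z} \<in> E" using uz by blast
    then have "u' = z"
      using nbr[of u u' z] uz u' eE fE by (auto simp: insert_commute)
    moreover have "z' = u"
      using nbr[of z z' u] \<open>{u, z} \<in> E\<close> uz z' eE fE by (auto simp: insert_commute)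
    ultimately show ?thesis using u' z' by auto
  qed
qed

lemma co2plex_vertex_not_utter_adj:
  assumes G: "graph V E" and co: "co2plex V E S"
    and "w \<in> S" "f \<in> induced_edges E S" "w \<notin> f"
  shows "\<not> utter_adj_ve E w f"
proof
  assume "utter_adj_ve E w f"
  then obtain u where u: "u \<in> f" "{w, u} \<in> E"
    using \<open>w \<notin> f\<close> unfolding utter_adj_ve_def by blast
  have fE: "f \<in> E" "f \<subseteq> S" using \<open>f \<in> induced_edges E S\<close> by (auto simp: induced_edges_def)
  obtain u' where u': "u' \<noteq> u" "f = {u, u'}" using graph_edge_other_end[OF G fE(1) u(1)] .
  have "w = u'"
    using co2plex_unique_neighbour[OF G co, of u w u'] u u' fE \<open>w \<in> S\<close> by (auto simp: insert_commute)
  with u' \<open>w \<notin> f\<close> show False by simp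
qed

lemma co2plex_clique_card:
  assumes G: "graph V E" and co: "co2plex V E S"
    and "K \<subseteq> S" and clique: "\<forall>u\<in>K. \<forall>w\<in>K. u \<noteq> w \<longrightarrow> {u, w} \<in> E"
  shows "card K \<le> 2"
proof (cases "K = {}")
  case False
  then obtain w where "w \<in> K" by blast
  have "finite S" using co2plex_finite[OF G co] .
  then have "card (K - {w}) \<le> card {u \<in> S. {u, w} \<in> E}"
    using \<open>K \<subseteq> S\<close> \<open>w \<in> K\<close> clique by (intro card_mono) auto
  also have "\<dots> \<le> 1"
    using co \<open>K \<subseteq> S\<close> \<open>w \<in> K\<close> unfolding co2plex_def by blast
  finally show ?thesis
    using \<open>w \<in> K\<close> \<open>finite S\<close> \<open>K \<subseteq> S\<close> by (metis card_Diff_singleton_if finite_subset le_diff_conv one_add_one)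
qed simp

lemma co2plex_degree:
  assumes G: "graph V E" and co: "co2plex V E S"
  shows "card (delta E v \<inter> induced_edges E S) \<le> (if v \<in> S then 1 else 0)"
proof (cases "v \<in> S")
  case True
  have "card (delta E v \<inter> induced_edges E S) \<le> Suc 0"
  proof (subst card_le_Suc0_iff_eq, use finite_induced_edges[OF G] in blast, intro ballI)
    fix e f assume ef: "e \<in> delta E v \<inter> induced_edges E S" "f \<in> delta E v \<inter> induced_edges E S"
    then have "utter_adj_ee E e f"
      by (auto simp: delta_def utter_adj_ee_def)
    with ef show "e = f"
      using co2plex_edges_not_utter_adj[OF G co] by blast
  qed
  with True show ?thesis by simp
next
  case False
  then have "delta E v \<inter> induced_edges E S = {}"
    by (auto simp: delta_def induced_edges_def)
  then show ?thesis by simp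
qed

lemma co2plex_utter_clique_inequality:
  assumes G: "graph V E" and co: "co2plex V E S" and uc: "utter_clique V E W F"
  shows "int (card (W \<inter> S)) + int (card (F \<inter> induced_edges E (V - W) \<inter> induced_edges E S))
     - int (card (induced_edges E W \<inter> induced_edges E S)) \<le> 1"
proof -
  have clique: "\<forall>u\<in>W. \<forall>w\<in>W. u \<noteq> w \<longrightarrow> {u, w} \<in> E"
    and ve: "\<forall>w\<in>W. \<forall>f\<in>F. utter_adj_ve E w f" and ee: "\<forall>e\<in>F. \<forall>f\<in>F. e \<noteq> f \<longrightarrow> utter_adj_ee E e f"
    using uc unfolding utter_clique_def utter_adj_vv_def by auto
  define Fout where "Fout = F \<inter> induced_edges E (V - W) \<inter> induced_edges E S"
  define EW where "EW = induced_edges E W \<inter> induced_edges E S"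
  have Fout_le: "card Fout \<le> 1"
  proof (subst One_nat_def, subst card_le_Suc0_iff_eq)
    show "finite Fout" using finite_induced_edges[OF G] by (simp add: Fout_def)
    show "\<forall>e\<in>Fout. \<forall>f\<in>Fout. e = f"
      using ee co2plex_edges_not_utter_adj[OF G co] by (auto simp: Fout_def)
  qed
  have Fout_empty: "Fout = {}" if meets: "card (W \<inter> S) > 0"
  proof -
    from meets have "W \<inter> S \<noteq> {}" by auto
    then obtain w where "w \<in> W" "w \<in> S" by blast
    then show ?thesis
      using ve co2plex_vertex_not_utter_adj[OF G co, of w]
      by (fastforce simp: Fout_def induced_edges_def)
  qed
  have EW_ge: "card EW \<ge> 1" if two: "card (W \<inter> S) = 2"
  proof -
    obtain a b where ab: "a \<noteq> b" "W \<inter> S = {a, b}"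
      using two unfolding card_2_iff by blast
    then have "{a, b} \<in> EW"
      using clique by (auto simp: EW_def induced_edges_def)
    then show ?thesis
      using finite_induced_edges[OF G] by (metis EW_def One_nat_def Suc_leI card_gt_0_iff empty_iff finite_Int)
  qed
  have WS_le: "card (W \<inter> S) \<le> 2"
    using co2plex_clique_card[OF G co, of "W \<inter> S"] clique by blast
  then consider "card (W \<inter> S) = 0" | "card (W \<inter> S) = 1" | "card (W \<inter> S) = 2"
    by linarith
  then show ?thesis
  proof cases
    case 1
    then show ?thesis using Fout_le by (simp add: Fout_def EW_def)
  next
    case 2
    then show ?thesis using Fout_empty by (simp add: Fout_def EW_def)
  next
    case 3
    then show ?thesis using Fout_empty EW_ge by (simp add: Fout_def EW_def)
  qed
qed

lemma co2plex_incidence_degree_inequality: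
  fixes x :: "'a \<Rightarrow> int" and y :: "'a set \<Rightarrow> int"
  assumes G: "graph V E" and co: "co2plex V E S" and "v \<in> V"
    and xS: "\<forall>v\<in>V. x v = (if v \<in> S then 1 else 0)"
    and yS: "\<forall>e\<in>E. y e = (if e \<in> induced_edges E S then 1 else 0)"
  shows "sum y (delta E v) \<le> x v"
proof -
  have "sum y (delta E v) = int (card (delta E v \<inter> induced_edges E S))"
    using yS graph_finite_edges[OF G] by (intro sum_indicator) (auto simp: delta_def)
  with co2plex_degree[OF G co, of v] xS \<open>v \<in> V\<close> show ?thesis
    by (simp split: if_splits)
qed

lemma co2plex_incidence_clique_inequality:
  fixes x :: "'a \<Rightarrow> int" and y :: "'a set \<Rightarrow> int"
  assumes G: "graph V E" and co: "co2plex V E S" and uc: "utter_clique V E W F"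
    and xS: "\<forall>v\<in>V. x v = (if v \<in> S then 1 else 0)"
    and yS: "\<forall>e\<in>E. y e = (if e \<in> induced_edges E S then 1 else 0)"
  shows "sum x W + sum y (F \<inter> induced_edges E (V - W)) - sum y (induced_edges E W) \<le> 1"
proof -
  have WV: "W \<subseteq> V" and FE: "F \<subseteq> E"
    using uc unfolding utter_clique_def by auto
  have finE: "finite E" using graph_finite_edges[OF G] .
  have "sum x W = int (card (W \<inter> S))"
    using xS WV G finite_subset by (intro sum_indicator) (auto simp: graph_def)
  moreover have "sum y (F \<inter> induced_edges E (V - W))
      = int (card (F \<inter> induced_edges E (V - W) \<inter> induced_edges E S))"
    using yS FE finite_subset[OF _ finE] by (intro sum_indicator) auto
  moreover have "sum y (induced_edges E W) = int (card (induced_edges E W \<inter> induced_edges E S))"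
    using yS finite_induced_edges[OF G] by (intro sum_indicator) (auto simp: induced_edges_def)
  ultimately show ?thesis
    using co2plex_utter_clique_inequality[OF G co uc] by simp
qed

lemma co2plex_incidence_vector_feasible:
  fixes x :: "'a \<Rightarrow> int" and y :: "'a set \<Rightarrow> int"
  assumes G: "graph V E" and Ucl: "\<forall>(W, F)\<in>U. utter_clique V E W F" and co: "co2plex V E S"
    and xS: "\<forall>v\<in>V. x v = (if v \<in> S then 1 else 0)"
    and yS: "\<forall>e\<in>E. y e = (if e \<in> induced_edges E S then 1 else 0)"
  shows "(\<forall>v\<in>V. x v \<in> {0, 1}) \<and> (\<forall>e\<in>E. y e \<in> {0, 1})
     \<and> (\<forall>(W, F)\<in>U. sum x W + sum y (F \<inter> induced_edges E (V - W))
                       - sum y (induced_edges E W) \<le> 1)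
     \<and> (\<forall>v\<in>V. sum y (delta E v) \<le> x v)"
proof (intro conjI)
  show "\<forall>v\<in>V. x v \<in> {0, 1}" using xS by simp
  show "\<forall>e\<in>E. y e \<in> {0, 1}" using yS by simp
  show "\<forall>v\<in>V. sum y (delta E v) \<le> x v"
    using co2plex_incidence_degree_inequality[OF G co _ xS yS] by blast
  show "\<forall>(W, F)\<in>U. sum x W + sum y (F \<inter> induced_edges E (V - W)) - sum y (induced_edges E W) \<le> 1"
  proof clarify
    fix W F assume "(W, F) \<in> U"
    then show "sum x W + sum y (F \<inter> induced_edges E (V - W)) - sum y (induced_edges E W) \<le> 1"
      using bspec[OF Ucl] co2plex_incidence_clique_inequality[OF G co _ xS yS] by auto
  qed
qed

lemma edge_weight_le_endpoint_weight:
  fixes y :: "'a set \<Rightarrow> 'b::ordered_comm_monoid_add"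
  assumes G: "graph V E" and ynn: "\<forall>e\<in>E. 0 \<le> y e"
    and deg: "\<forall>v\<in>V. sum y (delta E v) \<le> x v" and "e \<in> E" "v \<in> e"
  shows "y e \<le> x v"
proof -
  have "sum y {e} \<le> sum y (delta E v)"
    using assms graph_finite_edges[OF G] by (intro sum_mono2) (auto simp: delta_def)
  also have "\<dots> \<le> x v"
    using deg graph_edge_subset[OF G \<open>e \<in> E\<close>] \<open>v \<in> e\<close> by blast
  finally show ?thesis by simp
qed

lemma adjacent_edges_weight_le_common_endpoint_weight:
  fixes y :: "'a set \<Rightarrow> 'b::ordered_comm_monoid_add"
  assumes G: "graph V E" and ynn: "\<forall>e\<in>E. 0 \<le> y e"
    and deg: "\<forall>v\<in>V. sum y (delta E v) \<le> x v"
    and "f \<in> E" "g \<in> E" "f \<noteq> g" "v \<in> f" "v \<in> g"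
  shows "y f + y g \<le> x v"
proof -
  have "sum y {f, g} \<le> sum y (delta E v)"
    using assms graph_finite_edges[OF G] by (intro sum_mono2) (auto simp: delta_def)
  also have "\<dots> \<le> x v"
    using deg graph_edge_subset[OF G \<open>f \<in> E\<close>] \<open>v \<in> f\<close> by blast
  finally show ?thesis using \<open>f \<noteq> g\<close> by simp
qed

lemma sum_delta_induced_edges:
  fixes y :: "'a set \<Rightarrow> 'b::comm_semiring_1"
  assumes G: "graph V E" and "W \<subseteq> V"
  shows "(\<Sum>v\<in>W. sum y (delta E v \<inter> induced_edges E W)) = 2 * sum y (induced_edges E W)"
proof -
  have finW: "finite W" using G \<open>W \<subseteq> V\<close> finite_subset by (auto simp: graph_def)
  have "(\<Sum>v\<in>W. sum y (delta E v \<inter> induced_edges E W))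
      = (\<Sum>v\<in>W. \<Sum>e\<in>{e. e \<in> induced_edges E W \<and> v \<in> e}. y e)"
    by (intro sum.cong) (auto simp: delta_def induced_edges_def)
  also have "\<dots> = (\<Sum>e\<in>induced_edges E W. \<Sum>v\<in>{v. v \<in> W \<and> v \<in> e}. y e)"
    using finW finite_induced_edges[OF G] by (rule sum.swap_restrict)
  also have "\<dots> = (\<Sum>e\<in>induced_edges E W. 2 * y e)"
  proof (intro sum.cong refl)
    fix e assume e: "e \<in> induced_edges E W"
    then have "{v. v \<in> W \<and> v \<in> e} = e" and "card e = 2"
      using graph_edge_card[OF G] by (auto simp: induced_edges_def)
    then show "(\<Sum>v\<in>{v. v \<in> W \<and> v \<in> e}. y e) = 2 * y e" by simp
  qed
  finally show ?thesis by (simp add: sum_distrib_left)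
qed

lemma induced_edges_weight_le:
  fixes y :: "'a set \<Rightarrow> 'b::{ordered_comm_monoid_add, comm_semiring_1}"
  assumes G: "graph V E" and ynn: "\<forall>e\<in>E. 0 \<le> y e"
    and deg: "\<forall>v\<in>V. sum y (delta E v) \<le> x v" and "W \<subseteq> V"
  shows "2 * sum y (induced_edges E W) \<le> sum x W"
proof -
  have "2 * sum y (induced_edges E W) = (\<Sum>v\<in>W. sum y (delta E v \<inter> induced_edges E W))"
    using sum_delta_induced_edges[OF G \<open>W \<subseteq> V\<close>, of y] by simp
  also have "\<dots> \<le> (\<Sum>v\<in>W. sum y (delta E v))"
    using ynn graph_finite_edges[OF G] by (intro sum_mono sum_mono2) (auto simp: delta_def)
  also have "\<dots> \<le> sum x W"
    using deg \<open>W \<subseteq> V\<close> by (intro sum_mono) auto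
  finally show ?thesis .
qed

lemma feasible_vector_edge_chosen:
  fixes x :: "'a \<Rightarrow> int" and y :: "'a set \<Rightarrow> int"
  assumes G: "graph V E"
    and Ucl: "\<forall>(W, F)\<in>U. utter_clique V E W F"
    and Ucov: "(\<Union>(W, F)\<in>U. induced_edges E W) = E"
    and x01: "\<forall>v\<in>V. x v \<in> {0, 1}" and y01: "\<forall>e\<in>E. y e \<in> {0, 1}"
    and cl: "\<forall>(W, F)\<in>U. sum x W + sum y (F \<inter> induced_edges E (V - W))
                       - sum y (induced_edges E W) \<le> 1"
    and deg: "\<forall>v\<in>V. sum y (delta E v) \<le> x v"
    and "e \<in> E" and e_support: "\<forall>v\<in>e. x v = 1"
  shows "y e = 1"
proof -
  define S where "S = {v \<in> V. x v = 1}"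
  have "e \<in> (\<Union>(W, F)\<in>U. induced_edges E W)"
    unfolding Ucov by (rule \<open>e \<in> E\<close>)
  then obtain W F where WF: "(W, F) \<in> U" "e \<in> induced_edges E W" by auto
  have WV: "W \<subseteq> V" using bspec[OF Ucl WF(1)] by (simp add: utter_clique_def)
  have finW: "finite W" using G WV finite_subset by (auto simp: graph_def)
  have ynn: "\<forall>e\<in>E. 0 \<le> y e" using y01 by auto
  have y_le_x: "y f \<le> x v" if "f \<in> E" "v \<in> f" for f v
    using edge_weight_le_endpoint_weight[OF G ynn deg that] .
  have xW: "sum x W = int (card (W \<inter> S))"
    using x01 WV by (intro sum_indicator[OF finW]) (auto simp: S_def)
  have "2 * sum y (induced_edges E W) \<le> sum x W"
    using induced_edges_weight_le[OF G ynn deg WV] .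
  moreover have "sum x W - sum y (induced_edges E W) \<le> 1"
  proof -
    have "0 \<le> sum y (F \<inter> induced_edges E (V - W))"
      using ynn by (intro sum_nonneg) (auto simp: induced_edges_def)
    moreover have "sum x W + sum y (F \<inter> induced_edges E (V - W)) - sum y (induced_edges E W) \<le> 1"
      using bspec[OF cl WF(1)] by simp
    ultimately show ?thesis by linarith
  qed
  moreover have eWS: "e \<subseteq> W \<inter> S"
    using WF(2) e_support graph_edge_subset[OF G \<open>e \<in> E\<close>] by (auto simp: S_def induced_edges_def)
  then have "2 \<le> card (W \<inter> S)"
    using graph_edge_card[OF G \<open>e \<in> E\<close>] card_mono[of "W \<inter> S" e] finW by simp
  ultimately have WS2: "card (W \<inter> S) = 2" and "sum y (induced_edges E W) \<noteq> 0"
    using xW by linarith+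
  then obtain f where f: "f \<in> induced_edges E W" "y f \<noteq> 0"
    by (meson sum.not_neutral_contains_not_neutral)
  then have "f \<in> E" "f \<subseteq> W" "y f = 1"
    using y01 by (auto simp: induced_edges_def)
  have "f \<subseteq> W \<inter> S"
  proof
    fix v assume "v \<in> f"
    then have "v \<in> V" "1 \<le> x v"
      using graph_edge_subset[OF G \<open>f \<in> E\<close>] y_le_x[OF \<open>f \<in> E\<close>] \<open>y f = 1\<close> by auto
    with \<open>v \<in> f\<close> \<open>f \<subseteq> W\<close> x01 show "v \<in> W \<inter> S" by (auto simp: S_def)
  qed
  have "f = W \<inter> S" "e = W \<inter> S"
    using card_subset_eq[OF finite_Int[OF disjI1[OF finW]]] \<open>f \<subseteq> W \<inter> S\<close> eWS WS2
      graph_edge_card[OF G \<open>f \<in> E\<close>] graph_edge_card[OF G \<open>e \<in> E\<close>] by auto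
  then have "f = e" by simp
  with \<open>y f = 1\<close> show ?thesis by simp
qed

lemma feasible_vector_co2plex_incidence:
  fixes x :: "'a \<Rightarrow> int" and y :: "'a set \<Rightarrow> int"
  assumes G: "graph V E"
    and Ucl: "\<forall>(W, F)\<in>U. utter_clique V E W F"
    and Ucov: "(\<Union>(W, F)\<in>U. induced_edges E W) = E"
    and x01: "\<forall>v\<in>V. x v \<in> {0, 1}" and y01: "\<forall>e\<in>E. y e \<in> {0, 1}"
    and cl: "\<forall>(W, F)\<in>U. sum x W + sum y (F \<inter> induced_edges E (V - W))
                       - sum y (induced_edges E W) \<le> 1"
    and deg: "\<forall>v\<in>V. sum y (delta E v) \<le> x v"
  defines "S \<equiv> {v \<in> V. x v = 1}"
  shows "co2plex V E S \<and> (\<forall>v\<in>V. x v = (if v \<in> S then 1 else 0))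
           \<and> (\<forall>e\<in>E. y e = (if e \<in> induced_edges E S then 1 else 0))"
proof (intro conjI ballI)
  have ynn: "\<forall>e\<in>E. 0 \<le> y e" using y01 by auto
  have chosen: "y e = 1" if "e \<in> E" "e \<subseteq> S" for e
    using feasible_vector_edge_chosen[OF G Ucl Ucov x01 y01 cl deg that(1)] that(2)
    by (auto simp: S_def)
  show "co2plex V E S"
    unfolding co2plex_def
  proof (intro conjI ballI)
    show "S \<subseteq> V" by (auto simp: S_def)
    fix v assume "v \<in> S"
    have "finite S" using G by (simp add: graph_def S_def)
    then have "finite {u \<in> S. {u, v} \<in> E}" by simp
    moreover have "a = b" if "a \<in> {u \<in> S. {u, v} \<in> E}" "b \<in> {u \<in> S. {u, v} \<in> E}" for a b
    proof (rule ccontr)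
      assume "a \<noteq> b"
      then have "y {a, v} + y {b, v} \<le> x v"
        using that by (intro adjacent_edges_weight_le_common_endpoint_weight[OF G ynn deg])
          (auto simp: doubleton_eq_iff)
      moreover have "y {a, v} = 1" "y {b, v} = 1"
        using that \<open>v \<in> S\<close> chosen[of "{a, v}"] chosen[of "{b, v}"] by simp_all
      ultimately show False using \<open>v \<in> S\<close> by (simp add: S_def)
    qed
    ultimately show "card {u \<in> S. {u, v} \<in> E} \<le> 1"
      unfolding One_nat_def by (subst card_le_Suc0_iff_eq) blast+
  qed
  show "x v = (if v \<in> S then 1 else 0)" if "v \<in> V" for v
    using x01 that by (auto simp: S_def)
  fix e assume "e \<in> E"
  show "y e = (if e \<in> induced_edges E S then 1 else 0)"
  proof (cases "e \<subseteq> S")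
    case True
    with chosen \<open>e \<in> E\<close> show ?thesis by (simp add: induced_edges_def)
  next
    case False
    then obtain v where "v \<in> e" "x v = 0"
      using x01 graph_edge_subset[OF G \<open>e \<in> E\<close>] by (auto simp: S_def)
    then have "y e \<le> 0"
      using edge_weight_le_endpoint_weight[OF G ynn deg \<open>e \<in> E\<close>, of v] by simp
    then have "y e = 0"
      using y01 \<open>e \<in> E\<close> by auto
    with False show ?thesis by (simp add: induced_edges_def)
  qed
qed

theorem mainTheorem15:
  fixes V :: "'a set" and E :: "'a set set"
    and U :: "('a set \<times> 'a set set) set"
  assumes G: "graph V E"
    and Ucl: "\<forall>(W, F)\<in>U. utter_clique V E W F"
    and Ucov: "(\<Union>(W, F)\<in>U. induced_edges E W) = E"
  shows "\<forall>(x :: 'a \<Rightarrow> int) (y :: 'a set \<Rightarrow> int).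
     (\<forall>v\<in>V. x v \<in> {0, 1}) \<and> (\<forall>e\<in>E. y e \<in> {0, 1})
     \<and> (\<forall>(W, F)\<in>U. sum x W + sum y (F \<inter> induced_edges E (V - W))
                       - sum y (induced_edges E W) \<le> 1)
     \<and> (\<forall>v\<in>V. sum y (delta E v) \<le> x v)
   \<longleftrightarrow> (\<exists>S. co2plex V E S \<and> (\<forall>v\<in>V. x v = (if v \<in> S then 1 else 0))
           \<and> (\<forall>e\<in>E. y e = (if e \<in> induced_edges E S then 1 else 0)))"
  using feasible_vector_co2plex_incidence[OF G Ucl Ucov] co2plex_incidence_vector_feasible[OF G Ucl]
  by (intro allI iffI; elim conjE exE) blast+

end
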